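(* Let $n=n_1+\cdots+n_s$ with $n_i\ge 1$ and let $M=Sp(n)/U(n_1)\times\cdots\times U(n_s)$ be the corresponding flag manifold. Then the set $\Pi_{\mathfrak t}$ of t-roots of $M$ is a root system of type $C_s$.
   Context: Let $\mathfrak g=\mathfrak{sp}(n,\mathbb C)$ with Cartan subalgebra $\mathfrak h$ of diagonal matrices $\mathrm{diag}(\varepsilon_1,\dots,\varepsilon_n,-\varepsilon_1,\dots,-\varepsilon_n)$, and root system $\Pi=\{\pm(\varepsilon_i\pm\varepsilon_j):1\le i<j\le n\}\cup\{\pm2\varepsilon_i\}$. Write $\varepsilon^i_a=\varepsilon_{n_1+\cdots+n_{i-1}+a}$, $1\le a\le n_i$. The isotropy subalgebra of $M$ has complexification $\mathfrak k^{\mathbb C}=\mathfrak h\oplus\bigoplus_{\alpha\in\Pi_\Theta}\mathfrak g_\alpha$, where $\Pi_\Theta=\{\pm(\varepsilon^i_a-\varepsilon^i_b):1\le i\le s,\ 1\le a<b\le n_i\}$; let $\Pi_M=\Pi\setminus\Pi_\Theta$. Let $\mathfrak h_{\mathbb R}$ be the real span of the coroots $H_\alpha$ and $\mathfrak t=\{H\in i\mathfrak h_{\mathbb R}:\alpha(H)=0\text{ for all }\alpha\in\Pi_\Theta\}$. With $k:(i\mathfrak h_{\mathbb R})^*\to\mathfrak t^*$ the restriction map, the t-roots are $\Pi_{\mathfrak t}=k(\Pi_M)$. *)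

theory Defs
  imports Complex_Main "HOL-Library.FuncSet"
begin

text \<open>Model: i h_R is identified with real vectors x = (x_0,...,x_{n-1}) (functions
nat => real vanishing from n on), x_k being the value of epsilon_{k+1}.\<close>

type_synonym vec = "nat \<Rightarrow> real"
type_synonym functional = "vec \<Rightarrow> real"

definition ambient :: "nat \<Rightarrow> vec set" where
  "ambient n = {x. \<forall>k. n \<le> k \<longrightarrow> x k = 0}"

definition sp_roots :: "nat \<Rightarrow> functional set" where
  "sp_roots n =
     {(\<lambda>x. \<sigma> * x i + \<tau> * x j) | i j \<sigma> \<tau>. i < j \<and> j < n \<and> \<sigma> \<in> {1, -1} \<and> \<tau> \<in> {1, -1}}
   \<union> {(\<lambda>x. \<sigma> * 2 * x i) | i \<sigma>. i < n \<and> \<sigma> \<in> {1, -1}}"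

text \<open>Index of eps^i_a (0-based i and a): n_1+...+n_{i-1}+a.\<close>
definition eps_idx :: "nat list \<Rightarrow> nat \<Rightarrow> nat \<Rightarrow> nat" where
  "eps_idx ns i a = sum_list (take i ns) + a"

definition Pi_Theta :: "nat list \<Rightarrow> functional set" where
  "Pi_Theta ns =
     {(\<lambda>x. \<sigma> * (x (eps_idx ns i a) - x (eps_idx ns i b))) | i a b \<sigma>.
        i < length ns \<and> a < b \<and> b < ns ! i \<and> \<sigma> \<in> {1, -1}}"

definition Pi_M :: "nat list \<Rightarrow> functional set" where
  "Pi_M ns = sp_roots (sum_list ns) - Pi_Theta ns"

definition tspace :: "nat list \<Rightarrow> vec set" where
  "tspace ns = {x \<in> ambient (sum_list ns). \<forall>\<alpha>\<in>Pi_Theta ns. \<alpha> x = 0}"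

definition kres :: "nat list \<Rightarrow> functional \<Rightarrow> functional" where
  "kres ns \<alpha> = restrict \<alpha> (tspace ns)"

definition t_roots :: "nat list \<Rightarrow> functional set" where
  "t_roots ns = kres ns ` Pi_M ns"

text \<open>A set R of linear functionals on a real subspace T is a root system of type C_s
  if there is a linear isomorphism L : T -> R^s such that R is exactly the set of
  pullbacks (restricted to T) of the standard C_s roots pm(e_i pm e_j), pm 2 e_i
  (i.e. the dual isomorphism R^s* -> T^* carries the standard C_s system onto R).\<close>
definition root_system_C :: "vec set \<Rightarrow> functional set \<Rightarrow> nat \<Rightarrow> bool" where
  "root_system_C T R s \<longleftrightarrow>
     (\<exists>L :: vec \<Rightarrow> vec.
        (\<forall>x\<in>T. \<forall>y\<in>T. L (\<lambda>k. x k + y k) = (\<lambda>k. L x k + L y k)) \<and>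
        (\<forall>c. \<forall>x\<in>T. L (\<lambda>k. c * x k) = (\<lambda>k. c * L x k)) \<and>
        bij_betw L T (ambient s) \<and>
        R = {restrict (\<beta> \<circ> L) T | \<beta>. \<beta> \<in> sp_roots s})"

end

theory Submission
  imports Defs
begin

text \<open>The space \<open>t\<close> consists of the vectors that are constant on each block
  \<open>\<epsilon>\<^sup>i\<^sub>1, \<dots>, \<epsilon>\<^sup>i\<^sub>n\<^sub>i\<close>, so reading off one value per block is a linear isomorphism
  \<open>t \<cong> \<real>\<^sup>s\<close>. Under it, \<open>\<epsilon>\<^sup>i\<^sub>a \<plusminus> \<epsilon>\<^sup>j\<^sub>b\<close> restricts to \<open>e\<^sub>i \<plusminus> e\<^sub>j\<close> and \<open>2\<epsilon>\<^sup>i\<^sub>a\<close> to \<open>2e\<^sub>i\<close>.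
  For \<open>i = j\<close> the root \<open>\<epsilon>\<^sup>i\<^sub>a + \<epsilon>\<^sup>i\<^sub>b\<close> gives the long root \<open>2e\<^sub>i\<close>, while
  \<open>\<epsilon>\<^sup>i\<^sub>a - \<epsilon>\<^sup>i\<^sub>b\<close> would give \<open>0\<close> but lies in \<open>\<Pi>\<^sub>\<Theta>\<close>. Conversely every root of \<open>C\<^sub>s\<close>
  is hit, using the first coordinate of each block as representative.\<close>

fun block_of :: "nat list \<Rightarrow> nat \<Rightarrow> nat" where
  "block_of [] k = 0"
| "block_of (m # ms) k = (if k < m then 0 else Suc (block_of ms (k - m)))"

definition block_coords :: "nat list \<Rightarrow> vec \<Rightarrow> vec" where
  "block_coords ns x = (\<lambda>i. if i < length ns then x (eps_idx ns i 0) else 0)"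

lemma eps_idx_Cons_0 [simp]: "eps_idx (m # ms) 0 a = a"
  by (simp add: eps_idx_def)

lemma eps_idx_Cons_Suc [simp]: "eps_idx (m # ms) (Suc i) a = m + eps_idx ms i a"
  by (simp add: eps_idx_def)

lemma eps_idx_less_sum_list:
  "i < length ns \<Longrightarrow> a < ns ! i \<Longrightarrow> eps_idx ns i a < sum_list ns"
proof (induction ns arbitrary: i)
  case (Cons m ms)
  then show ?case by (cases i) auto
qed simp

lemma block_of_eps_idx:
  "i < length ns \<Longrightarrow> a < ns ! i \<Longrightarrow> block_of ns (eps_idx ns i a) = i"
proof (induction ns arbitrary: i)
  case (Cons m ms)
  then show ?case by (cases i) auto
qed simp

lemma block_of_less_length: "k < sum_list ns \<Longrightarrow> block_of ns k < length ns"
  by (induction ns arbitrary: k) auto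

lemma eps_idx_block_of:
  "k < sum_list ns \<Longrightarrow> \<exists>a < ns ! block_of ns k. k = eps_idx ns (block_of ns k) a"
proof (induction ns arbitrary: k)
  case (Cons m ms)
  show ?case
  proof (cases "k < m")
    case False
    with Cons.prems have "k - m < sum_list ms" by simp
    then obtain a where "a < ms ! block_of ms (k - m)" "k - m = eps_idx ms (block_of ms (k - m)) a"
      using Cons.IH by blast
    with False show ?thesis by auto
  qed auto
qed simp

lemma eps_idx_strict_mono:
  assumes "\<forall>m\<in>set ns. 1 \<le> m" "i < j" "j < length ns"
  shows "eps_idx ns i 0 < eps_idx ns j 0"
  using assms
proof (induction ns arbitrary: i j)
  case (Cons m ms)
  then obtain j' where "j = Suc j'" by (cases j) auto
  with Cons show ?case by (cases i) auto
qed simp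

text \<open>The block-constancy equation loops when used as a simp rule, since its right-hand side
  is again an instance of \<open>x k\<close>; it is only ever instantiated explicitly.\<close>

lemma tspace_iff:
  "x \<in> tspace ns \<longleftrightarrow>
     x \<in> ambient (sum_list ns) \<and> (\<forall>k < sum_list ns. x k = x (eps_idx ns (block_of ns k) 0))"
proof
  assume x: "x \<in> tspace ns"
  have "x k = x (eps_idx ns (block_of ns k) 0)" if k: "k < sum_list ns" for k
  proof -
    let ?i = "block_of ns k"
    obtain a where a: "a < ns ! ?i" "k = eps_idx ns ?i a"
      using eps_idx_block_of[OF k] by blast
    show ?thesis
    proof (cases "a = 0")
      case False
      then have "(\<lambda>x. 1 * (x (eps_idx ns ?i 0) - x (eps_idx ns ?i a))) \<in> Pi_Theta ns"
        unfolding Pi_Theta_def using a block_of_less_length[OF k] by blast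
      moreover have "\<forall>\<alpha>\<in>Pi_Theta ns. \<alpha> x = 0"
        using x by (simp add: tspace_def)
      ultimately have "x (eps_idx ns ?i 0) - x (eps_idx ns ?i a) = 0"
        by fastforce
      with a show ?thesis by simp
    qed (use a in simp)
  qed
  with x show "x \<in> ambient (sum_list ns) \<and> (\<forall>k < sum_list ns. x k = x (eps_idx ns (block_of ns k) 0))"
    unfolding tspace_def by blast
next
  assume x: "x \<in> ambient (sum_list ns) \<and> (\<forall>k < sum_list ns. x k = x (eps_idx ns (block_of ns k) 0))"
  have block_const: "x (eps_idx ns i a) = x (eps_idx ns i 0)" if "i < length ns" "a < ns ! i" for i a
    using x eps_idx_less_sum_list[OF that] block_of_eps_idx[OF that] by metis
  have "\<alpha> x = 0" if "\<alpha> \<in> Pi_Theta ns" for \<alpha>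
  proof -
    from that obtain i a b \<sigma> where \<alpha>: "\<alpha> = (\<lambda>x. \<sigma> * (x (eps_idx ns i a) - x (eps_idx ns i b)))"
      and i: "i < length ns" and ab: "a < b" "b < ns ! i"
      unfolding Pi_Theta_def by blast
    show ?thesis
      using block_const[OF i, of a] block_const[OF i, of b] ab by (simp add: \<alpha>)
  qed
  with x show "x \<in> tspace ns"
    unfolding tspace_def by blast
qed

lemma tspace_apply_block_coords:
  assumes "x \<in> tspace ns" "k < sum_list ns"
  shows "x k = block_coords ns x (block_of ns k)"
proof -
  have "x k = x (eps_idx ns (block_of ns k) 0)"
    using assms unfolding tspace_iff by blast
  with block_of_less_length[OF assms(2)] show ?thesis
    by (simp add: block_coords_def)
qed

lemma eps_idx_0_less_sum_list:
  "\<forall>m\<in>set ns. 1 \<le> m \<Longrightarrow> i < length ns \<Longrightarrow> eps_idx ns i 0 < sum_list ns"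
  by (metis eps_idx_less_sum_list less_le_trans nth_mem zero_less_one)

lemma block_of_eps_idx_0:
  "\<forall>m\<in>set ns. 1 \<le> m \<Longrightarrow> i < length ns \<Longrightarrow> block_of ns (eps_idx ns i 0) = i"
  by (metis block_of_eps_idx less_le_trans nth_mem zero_less_one)

lemma bij_betw_block_coords:
  assumes pos: "\<forall>m\<in>set ns. 1 \<le> m"
  shows "bij_betw (block_coords ns) (tspace ns) (ambient (length ns))"
proof (rule bij_betw_imageI)
  show "inj_on (block_coords ns) (tspace ns)"
  proof (rule inj_onI)
    fix x y assume xy: "x \<in> tspace ns" "y \<in> tspace ns" "block_coords ns x = block_coords ns y"
    show "x = y"
    proof
      fix k show "x k = y k"
      proof (cases "k < sum_list ns")
        case True
        then show ?thesis using xy tspace_apply_block_coords by metis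
      qed (use xy in \<open>simp add: tspace_def ambient_def\<close>)
    qed
  qed
  have "ambient (length ns) \<subseteq> block_coords ns ` tspace ns"
  proof
    fix y assume y: "y \<in> ambient (length ns)"
    define x where "x = (\<lambda>k. if k < sum_list ns then y (block_of ns k) else 0)"
    have "x \<in> tspace ns"
      unfolding tspace_iff
    proof (intro conjI allI impI)
      show "x \<in> ambient (sum_list ns)"
        by (simp add: x_def ambient_def)
      fix k assume k: "k < sum_list ns"
      then have "block_of ns k < length ns"
        by (rule block_of_less_length)
      with k pos show "x k = x (eps_idx ns (block_of ns k) 0)"
        by (simp add: x_def eps_idx_0_less_sum_list block_of_eps_idx_0)
    qed
    moreover have "block_coords ns x = y"
    proof
      fix i show "block_coords ns x i = y i"
        using y pos
        by (simp add: block_coords_def x_def ambient_def eps_idx_0_less_sum_list block_of_eps_idx_0)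
    qed
    ultimately show "y \<in> block_coords ns ` tspace ns"
      by blast
  qed
  moreover have "block_coords ns ` tspace ns \<subseteq> ambient (length ns)"
    by (auto simp: block_coords_def ambient_def)
  ultimately show "block_coords ns ` tspace ns = ambient (length ns)"
    by blast
qed

lemma Pi_M_restrict_eq_block_root:
  assumes "\<alpha> \<in> Pi_M ns"
  shows "\<exists>\<beta> \<in> sp_roots (length ns). \<forall>x \<in> tspace ns. \<alpha> x = \<beta> (block_coords ns x)"
proof -
  have \<alpha>: "\<alpha> \<in> sp_roots (sum_list ns)" "\<alpha> \<notin> Pi_Theta ns"
    using assms unfolding Pi_M_def by blast+
  from \<alpha>(1)[unfolded sp_roots_def] show ?thesis
  proof (elim UnE CollectE exE conjE)
    fix p q \<sigma> \<tau>
    assume A: "\<alpha> = (\<lambda>x. \<sigma> * x p + \<tau> * x q)" "p < q" "q < sum_list ns"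
      "\<sigma> \<in> {1, -1}" "\<tau> \<in> {1, -1}"
    have p: "p < sum_list ns" and q: "q < sum_list ns"
      using A by simp_all
    define i where "i = block_of ns p"
    define j where "j = block_of ns q"
    obtain a where a: "i < length ns" "a < ns ! i" "p = eps_idx ns i a"
      using eps_idx_block_of[OF p] block_of_less_length[OF p] unfolding i_def by blast
    obtain b where b: "j < length ns" "b < ns ! j" "q = eps_idx ns j b"
      using eps_idx_block_of[OF q] block_of_less_length[OF q] unfolding j_def by blast
    have val: "\<alpha> x = \<sigma> * block_coords ns x i + \<tau> * block_coords ns x j" if "x \<in> tspace ns" for x
      using A tspace_apply_block_coords[OF that p] tspace_apply_block_coords[OF that q]
      by (simp add: i_def j_def)
    consider "i < j" | "j < i" | "i = j" "\<tau> = \<sigma>" | "i = j" "\<tau> = - \<sigma>"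
      using A by (cases i j rule: linorder_cases) auto
    then show ?thesis
    proof cases
      case 1
      have \<beta>: "(\<lambda>y. \<sigma> * y i + \<tau> * y j) \<in> sp_roots (length ns)"
        unfolding sp_roots_def using 1 A b by blast
      show ?thesis using val by (intro bexI[OF _ \<beta>]) simp
    next
      case 2
      have \<beta>: "(\<lambda>y. \<tau> * y j + \<sigma> * y i) \<in> sp_roots (length ns)"
        unfolding sp_roots_def using 2 A a by blast
      show ?thesis using val by (intro bexI[OF _ \<beta>]) simp
    next
      case 3
      have \<beta>: "(\<lambda>y. \<sigma> * 2 * y i) \<in> sp_roots (length ns)"
        unfolding sp_roots_def using 3 A a by blast
      show ?thesis using val 3 by (intro bexI[OF _ \<beta>]) simp
    next
      case 4
      have "a < b"
        using A(2) a b 4 by (simp add: eps_idx_def)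
      moreover have "\<alpha> = (\<lambda>x. \<sigma> * (x (eps_idx ns i a) - x (eps_idx ns i b)))"
        using A a b 4 by (auto simp: algebra_simps)
      ultimately have "\<alpha> \<in> Pi_Theta ns"
        unfolding Pi_Theta_def using a b 4 A by blast
      with \<alpha>(2) show ?thesis ..
    qed
  next
    fix p \<sigma> assume A: "\<alpha> = (\<lambda>x. \<sigma> * 2 * x p)" "p < sum_list ns" "\<sigma> \<in> {1, -1}"
    have \<beta>: "(\<lambda>y. \<sigma> * 2 * y (block_of ns p)) \<in> sp_roots (length ns)"
      unfolding sp_roots_def using A block_of_less_length[of p ns] by blast
    have "\<alpha> x = \<sigma> * 2 * block_coords ns x (block_of ns p)" if "x \<in> tspace ns" for x
      using A tspace_apply_block_coords[OF that A(2)] by simp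
    then show ?thesis by (intro bexI[OF _ \<beta>]) simp
  qed
qed

text \<open>The vector \<open>k \<mapsto> block_of ns k + 1\<close> is constant on blocks, so every root in
  \<open>\<Pi>\<^sub>\<Theta>\<close> vanishes on it; this certifies that the lifted roots below lie in \<open>\<Pi>\<^sub>M\<close>.\<close>

lemma Pi_Theta_vanish_block_index:
  "\<alpha> \<in> Pi_Theta ns \<Longrightarrow> \<alpha> (\<lambda>k. real (block_of ns k) + 1) = 0"
  unfolding Pi_Theta_def by (auto simp: block_of_eps_idx)

lemma block_root_eq_Pi_M_restrict:
  assumes pos: "\<forall>m\<in>set ns. 1 \<le> m" and \<beta>: "\<beta> \<in> sp_roots (length ns)"
  shows "\<exists>\<alpha> \<in> Pi_M ns. \<forall>x \<in> tspace ns. \<alpha> x = \<beta> (block_coords ns x)"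
proof -
  let ?e = "\<lambda>i. eps_idx ns i 0"
  note block_start = eps_idx_0_less_sum_list[OF pos] block_of_eps_idx_0[OF pos]
  have lift: "\<exists>\<alpha> \<in> Pi_M ns. \<forall>x \<in> tspace ns. \<alpha> x = \<beta> (block_coords ns x)"
    if "\<alpha> \<in> sp_roots (sum_list ns)" "\<alpha> (\<lambda>k. real (block_of ns k) + 1) \<noteq> 0"
       "\<forall>x \<in> tspace ns. \<alpha> x = \<beta> (block_coords ns x)" for \<alpha>
    using that Pi_Theta_vanish_block_index unfolding Pi_M_def by blast
  from \<beta>[unfolded sp_roots_def] show ?thesis
  proof (elim UnE CollectE exE conjE)
    fix i j \<sigma> \<tau>
    assume A: "\<beta> = (\<lambda>x. \<sigma> * x i + \<tau> * x j)" "i < j" "j < length ns" "\<sigma> \<in> {1, -1}" "\<tau> \<in> {1, -1}"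
    have "?e i < ?e j"
      using eps_idx_strict_mono pos A by blast
    then have "(\<lambda>x. \<sigma> * x (?e i) + \<tau> * x (?e j)) \<in> sp_roots (sum_list ns)"
      unfolding sp_roots_def using A block_start(1)[of j] by blast
    then show ?thesis
    proof (rule lift)
      show "\<sigma> * (real (block_of ns (?e i)) + 1) + \<tau> * (real (block_of ns (?e j)) + 1) \<noteq> 0"
        using A block_start(2)[of i] block_start(2)[of j] by auto
      show "\<forall>x \<in> tspace ns. \<sigma> * x (?e i) + \<tau> * x (?e j) = \<beta> (block_coords ns x)"
        using A by (simp add: block_coords_def)
    qed
  next
    fix i \<sigma> assume A: "\<beta> = (\<lambda>x. \<sigma> * 2 * x i)" "i < length ns" "\<sigma> \<in> {1, -1}"
    then have "(\<lambda>x. \<sigma> * 2 * x (?e i)) \<in> sp_roots (sum_list ns)"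
      unfolding sp_roots_def using block_start(1)[of i] by blast
    then show ?thesis
    proof (rule lift)
      show "\<sigma> * 2 * (real (block_of ns (?e i)) + 1) \<noteq> 0"
        using A by auto
      show "\<forall>x \<in> tspace ns. \<sigma> * 2 * x (?e i) = \<beta> (block_coords ns x)"
        using A by (simp add: block_coords_def)
    qed
  qed
qed

lemma t_roots_eq_pullback:
  assumes "\<forall>m\<in>set ns. 1 \<le> m"
  shows "t_roots ns = {restrict (\<beta> \<circ> block_coords ns) (tspace ns) | \<beta>. \<beta> \<in> sp_roots (length ns)}"
proof -
  have restrict_eq: "restrict \<alpha> (tspace ns) = restrict (\<beta> \<circ> block_coords ns) (tspace ns)"
    if "\<forall>x \<in> tspace ns. \<alpha> x = \<beta> (block_coords ns x)" for \<alpha> \<beta> :: functional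
    using that by (intro restrict_ext) simp
  show ?thesis
  proof (intro equalityI subsetI)
    fix r assume "r \<in> t_roots ns"
    then obtain \<alpha> where \<alpha>: "\<alpha> \<in> Pi_M ns" and r: "r = restrict \<alpha> (tspace ns)"
      unfolding t_roots_def kres_def by blast
    obtain \<beta> where \<beta>: "\<beta> \<in> sp_roots (length ns)"
      and agree: "\<forall>x \<in> tspace ns. \<alpha> x = \<beta> (block_coords ns x)"
      using Pi_M_restrict_eq_block_root[OF \<alpha>] by blast
    from agree have "r = restrict (\<beta> \<circ> block_coords ns) (tspace ns)"
      unfolding r by (rule restrict_eq)
    with \<beta> show "r \<in> {restrict (\<beta> \<circ> block_coords ns) (tspace ns) | \<beta>. \<beta> \<in> sp_roots (length ns)}"
      by blast
  next
    fix r assume "r \<in> {restrict (\<beta> \<circ> block_coords ns) (tspace ns) | \<beta>. \<beta> \<in> sp_roots (length ns)}"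
    then obtain \<beta> where \<beta>: "\<beta> \<in> sp_roots (length ns)"
      and r: "r = restrict (\<beta> \<circ> block_coords ns) (tspace ns)"
      by blast
    obtain \<alpha> where \<alpha>: "\<alpha> \<in> Pi_M ns"
      and agree: "\<forall>x \<in> tspace ns. \<alpha> x = \<beta> (block_coords ns x)"
      using block_root_eq_Pi_M_restrict[OF assms \<beta>] by blast
    from agree have "r = kres ns \<alpha>"
      unfolding r kres_def by (rule restrict_eq[symmetric])
    with \<alpha> show "r \<in> t_roots ns"
      unfolding t_roots_def by blast
  qed
qed

theorem theorem2p7:
  fixes ns :: "nat list"
  assumes "ns \<noteq> []"
    and "\<forall>m\<in>set ns. 1 \<le> m"
  shows "root_system_C (tspace ns) (t_roots ns) (length ns)"
  unfolding root_system_C_def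
proof (intro exI conjI ballI allI)
  show "block_coords ns (\<lambda>k. x k + y k) = (\<lambda>k. block_coords ns x k + block_coords ns y k)"
    and "block_coords ns (\<lambda>k. c * x k) = (\<lambda>k. c * block_coords ns x k)" for x y c
    by (auto simp: block_coords_def)
  show "bij_betw (block_coords ns) (tspace ns) (ambient (length ns))"
    using assms(2) by (rule bij_betw_block_coords)
  show "t_roots ns = {restrict (\<beta> \<circ> block_coords ns) (tspace ns) | \<beta>. \<beta> \<in> sp_roots (length ns)}"
    using assms(2) by (rule t_roots_eq_pullback)
qed

end
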